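(* Let $D$ be a normal binary delta-matroid whose intersection graph $G_D$ is the complete simple graph $K_v$ on $v\ge1$ vertices (no loops). Then ${}^{\partial}w_{D}(z)=2^{v}z^{v-1}$ if $v$ is odd, and ${}^{\partial}w_{D}(z)=2^{v-1}z^{v}+2^{v-1}z^{v-2}$ if $v$ is even.
   Context: A delta-matroid is a set system $(E,\mathcal{F})$, $\mathcal{F}\ne\emptyset$ a family of subsets of finite $E$, satisfying: for all $X,Y\in\mathcal{F}$ and $u\in X\Delta Y$ there is $v\in X\Delta Y$ with $X\Delta\{u,v\}\in\mathcal{F}$. Twist: $D*A=(E,\{A\Delta X:X\in\mathcal{F}\})$. Width $w(D)$ = maximum minus minimum cardinality of feasible sets; twist polynomial ${}^{\partial}w_{D}(z)=\sum_{A\subseteq E}z^{w(D*A)}$. $D$ is normal if $\emptyset\in\mathcal{F}$. For a symmetric matrix $C$ over $GF(2)$ indexed by $E$, $D(C)=(E,\{A\subseteq E: C[A]\text{ nonsingular}\})$ ($C[A]$ principal submatrix, $C[\emptyset]$ nonsingular by convention). $D$ is binary if some twist of it is isomorphic to some $D(C)$. A normal binary $D$ equals $D(C)$ for a unique symmetric $C$; its intersection graph $G_D$ has vertex set $E$, distinct $u,v$ adjacent iff $C_{u,v}=1$, and a loop at $v$ iff $C_{v,v}=1$. *)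

theory Defs
  imports "HOL-Computational_Algebra.Polynomial"
begin

definition symdiff :: "'a set \<Rightarrow> 'a set \<Rightarrow> 'a set" (infixl "\<triangle>" 70) where
  "X \<triangle> Y = (X - Y) \<union> (Y - X)"

definition delta_matroid :: "'a set \<Rightarrow> 'a set set \<Rightarrow> bool" where
  "delta_matroid E F \<longleftrightarrow> finite E \<and> F \<subseteq> Pow E \<and> F \<noteq> {} \<and>
     (\<forall>X\<in>F. \<forall>Y\<in>F. \<forall>u\<in>X \<triangle> Y. \<exists>v\<in>X \<triangle> Y. X \<triangle> {u, v} \<in> F)"

definition twist :: "'a set set \<Rightarrow> 'a set \<Rightarrow> 'a set set" where
  "twist F A = (\<lambda>X. A \<triangle> X) ` F"

definition width :: "'a set set \<Rightarrow> nat" where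
  "width F = Max (card ` F) - Min (card ` F)"

definition twist_poly :: "'a set \<Rightarrow> 'a set set \<Rightarrow> int poly" where
  "twist_poly E F = (\<Sum>A\<in>Pow E. monom 1 (width (twist F A)))"

definition normal :: "'a set set \<Rightarrow> bool" where
  "normal F \<longleftrightarrow> {} \<in> F"

text \<open>Symmetric matrices over GF(2) indexed by E, as boolean-valued functions
  (True = 1), zero outside E.\<close>

definition sym_matrix_on :: "'a set \<Rightarrow> ('a \<Rightarrow> 'a \<Rightarrow> bool) \<Rightarrow> bool" where
  "sym_matrix_on E C \<longleftrightarrow> (\<forall>u v. C u v = C v u) \<and>
     (\<forall>u v. \<not> (u \<in> E \<and> v \<in> E) \<longrightarrow> \<not> C u v)"

text \<open>The principal submatrix C[A] (A finite) is nonsingular over GF(2) iff its kernel is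
  trivial: the only X \<subseteq> A (a 0/1 vector supported on A) with C[A] x = 0 is X = {}.
  For A = {} this holds, matching the convention that C[{}] is nonsingular.\<close>

definition nonsingular_principal :: "('a \<Rightarrow> 'a \<Rightarrow> bool) \<Rightarrow> 'a set \<Rightarrow> bool" where
  "nonsingular_principal C A \<longleftrightarrow>
     (\<forall>X\<subseteq>A. (\<forall>i\<in>A. even (card {j\<in>X. C i j})) \<longrightarrow> X = {})"

definition DC :: "'a set \<Rightarrow> ('a \<Rightarrow> 'a \<Rightarrow> bool) \<Rightarrow> 'a set set" where
  "DC E C = {A. A \<subseteq> E \<and> nonsingular_principal C A}"

definition binary_dm :: "'a set \<Rightarrow> 'a set set \<Rightarrow> bool" where
  "binary_dm E F \<longleftrightarrow> (\<exists>A\<subseteq>E. \<exists>E' C (f :: 'a \<Rightarrow> 'a). bij_betw f E E' \<and> sym_matrix_on E' C \<and>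
      (\<lambda>X. f ` X) ` twist F A = DC E' C)"

text \<open>Intersection graph of a normal binary delta-matroid: adjacency given by the unique
  symmetric C with F = D(C). (u adjacent to v for u \<noteq> v, loop at v if C v v.)\<close>

definition intersection_matrix :: "'a set \<Rightarrow> 'a set set \<Rightarrow> 'a \<Rightarrow> 'a \<Rightarrow> bool" where
  "intersection_matrix E F = (THE C. sym_matrix_on E C \<and> F = DC E C)"

end

theory Submission
  imports Defs
begin

text \<open>Over GF(2), the graph \<open>{(x, C x)}\<close> of a symmetric matrix \<open>C\<close> is a Lagrangian
  subspace of \<open>GF(2)^E \<times> GF(2)^E\<close>, and \<open>C[B]\<close> is nonsingular exactly when this subspace is
  transversal to the coordinate subspace determined by \<open>B\<close>. Twisting by \<open>A\<close> exchanges the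
  two summands on the coordinates in \<open>A\<close>, which preserves Lagrangians; if the twisted
  delta-matroid is normal, the new Lagrangian is transversal to \<open>0 \<times> GF(2)^E\<close>, hence again the
  graph of a symmetric matrix. So a normal binary delta-matroid is \<open>D(C)\<close>, and \<open>C\<close> is
  determined by the feasible sets of size one and two.

  For the complete graph, \<open>C[B] x = 0\<close> forces \<open>x = 0\<close> or \<open>x = 1\<close> with \<open>|B|\<close> odd, so the
  feasible sets are the subsets of even size. Their twists are the subsets of a fixed parity,
  of width \<open>v - 1\<close> when \<open>v\<close> is odd, and of width \<open>v\<close> or \<open>v - 2\<close>, each for half of the
  twists, when \<open>v\<close> is even.\<close>

section \<open>Symmetric matrices over GF(2)\<close>

lemma card_symdiff_add_card_Int:
  assumes "finite X" "finite Y"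
  shows "card (X \<triangle> Y) + 2 * card (X \<inter> Y) = card X + card Y"
proof -
  have "X \<triangle> Y = (X \<union> Y) - (X \<inter> Y)" by (auto simp: symdiff_def)
  hence "card (X \<triangle> Y) = card (X \<union> Y) - card (X \<inter> Y)"
    using assms by (simp add: card_Diff_subset Int_lower1 le_supI1)
  moreover have "card (X \<inter> Y) \<le> card (X \<union> Y)" using assms by (intro card_mono) auto
  ultimately show ?thesis using card_Un_Int[OF assms] by simp
qed

lemma even_card_symdiff:
  assumes "finite X" "finite Y"
  shows "even (card (X \<triangle> Y)) \<longleftrightarrow> (even (card X) \<longleftrightarrow> even (card Y))"
  using card_symdiff_add_card_Int[OF assms] by (metis even_add even_mult_iff even_numeral)

lemma symdiff_symdiff_cancel_left [simp]: "A \<triangle> (A \<triangle> X) = X"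
  by (auto simp: symdiff_def)

lemma twist_twist [simp]: "twist (twist F A) A = F"
  by (simp add: twist_def image_image)

text \<open>Vectors over GF(2) are represented by their supports, so that vector addition is
  \<open>\<triangle>\<close>; \<open>matvec C X\<close> is the support of the product of \<open>C\<close> with the vector supported on \<open>X\<close>.\<close>

definition matvec :: "('a \<Rightarrow> 'a \<Rightarrow> bool) \<Rightarrow> 'a set \<Rightarrow> 'a set" where
  "matvec C X = {i. odd (card {j\<in>X. C i j})}"

lemma matvec_empty [simp]: "matvec C {} = {}"
  by (simp add: matvec_def)

lemma matvec_symdiff:
  assumes "finite X" "finite Y"
  shows "matvec C (X \<triangle> Y) = matvec C X \<triangle> matvec C Y"
proof -
  have "{j\<in>X \<triangle> Y. C i j} = {j\<in>X. C i j} \<triangle> {j\<in>Y. C i j}" for i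
    by (auto simp: symdiff_def)
  hence "odd (card {j\<in>X \<triangle> Y. C i j}) \<longleftrightarrow> odd (card {j\<in>X. C i j}) \<noteq> odd (card {j\<in>Y. C i j})" for i
    using even_card_symdiff[of "{j\<in>X. C i j}" "{j\<in>Y. C i j}"] assms by simp
  thus ?thesis by (auto simp: matvec_def symdiff_def)
qed

lemma matvec_subset:
  assumes "sym_matrix_on E C"
  shows "matvec C X \<subseteq> E"
proof
  fix i assume "i \<in> matvec C X"
  hence "{j\<in>X. C i j} \<noteq> {}" by (auto simp: matvec_def simp del: Collect_empty_eq)
  thus "i \<in> E" using assms by (auto simp: sym_matrix_on_def)
qed

lemma nonsingular_principal_iff_matvec:
  "nonsingular_principal C A \<longleftrightarrow> (\<forall>X\<subseteq>A. A \<inter> matvec C X = {} \<longrightarrow> X = {})"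
  unfolding nonsingular_principal_def matvec_def by blast

lemma card_filter_singleton: "card {j\<in>{a}. P j} = of_bool (P a)"
proof -
  have "{j\<in>{a}. P j} = (if P a then {a} else {})" by auto
  thus ?thesis by simp
qed

lemma card_filter_doubleton:
  assumes "a \<noteq> b"
  shows "card {j\<in>{a, b}. P j} = of_bool (P a) + of_bool (P b)"
proof -
  have "{j\<in>{a, b}. P j} = (if P a then {a} else {}) \<union> (if P b then {b} else {})" by auto
  thus ?thesis using assms by (cases "P a"; cases "P b") simp_all
qed

lemma nonsingular_principal_singleton: "nonsingular_principal C {i} \<longleftrightarrow> C i i"
  unfolding nonsingular_principal_def subset_singleton_iff
  using card_filter_singleton[of i "C i"] by auto

lemma nonsingular_principal_doubleton:
  assumes "i \<noteq> j" "C i j = C j i"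
  shows "nonsingular_principal C {i, j} \<longleftrightarrow> (C i i \<and> C j j) \<noteq> C i j"
proof -
  have "X \<subseteq> {i, j} \<longleftrightarrow> X = {} \<or> X = {i} \<or> X = {j} \<or> X = {i, j}" for X
    by blast
  hence "nonsingular_principal C {i, j} \<longleftrightarrow>
      \<not> (\<forall>k\<in>{i, j}. even (card {l\<in>{i}. C k l})) \<and> \<not> (\<forall>k\<in>{i, j}. even (card {l\<in>{j}. C k l})) \<and>
      \<not> (\<forall>k\<in>{i, j}. even (card {l\<in>{i, j}. C k l}))"
    unfolding nonsingular_principal_def using assms(1) by auto
  thus ?thesis
    unfolding card_filter_singleton card_filter_doubleton[OF assms(1)] using assms
    by (cases "C i i"; cases "C j j"; cases "C i j") auto
qed

lemma even_card_Int_matvec_add: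
  assumes "sym_matrix_on E C" "finite X" "finite Y"
  shows "even (card (X \<inter> matvec C Y) + card (matvec C X \<inter> Y))"
proof -
  have "even (card (X \<inter> matvec C Y)) \<longleftrightarrow> even (\<Sum>i\<in>X. card {j\<in>Y. C i j})"
    using assms(2) by (simp add: even_sum_iff matvec_def Int_def conj_commute)
  also have "(\<Sum>i\<in>X. card {j\<in>Y. C i j}) = (\<Sum>i\<in>X. \<Sum>j\<in>Y. of_bool (C i j))"
    using assms(3) by (simp add: Int_def)
  also have "\<dots> = (\<Sum>j\<in>Y. \<Sum>i\<in>X. of_bool (C j i))"
    using assms(1) by (subst sum.swap) (simp add: sym_matrix_on_def)
  also have "\<dots> = (\<Sum>j\<in>Y. card {i\<in>X. C j i})"
    using assms(2) by (simp add: Int_def)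
  also have "even \<dots> \<longleftrightarrow> even (card (matvec C X \<inter> Y))"
    using assms(3) by (simp add: even_sum_iff matvec_def Int_def conj_commute)
  finally show ?thesis by simp
qed

section \<open>Lagrangian subspaces\<close>

definition matrix_graph :: "'a set \<Rightarrow> ('a \<Rightarrow> 'a \<Rightarrow> bool) \<Rightarrow> ('a set \<times> 'a set) set" where
  "matrix_graph E C = (\<lambda>X. (X, matvec C X)) ` Pow E"

text \<open>A subspace of \<open>GF(2)^E \<times> GF(2)^E\<close> of dimension \<open>|E|\<close> on which the symplectic form
  \<open>|X \<inter> Y'| + |Y \<inter> X'| mod 2\<close> vanishes.\<close>

definition lagrangian :: "'a set \<Rightarrow> ('a set \<times> 'a set) set \<Rightarrow> bool" where
  "lagrangian E L \<longleftrightarrow> L \<subseteq> Pow E \<times> Pow E \<and> card L = 2 ^ card E \<and>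
     (\<forall>X Y X' Y'. (X, Y) \<in> L \<longrightarrow> (X', Y') \<in> L \<longrightarrow>
        (X \<triangle> X', Y \<triangle> Y') \<in> L \<and> even (card (X \<inter> Y') + card (Y \<inter> X')))"

definition transversal :: "('a set \<times> 'a set) set \<Rightarrow> 'a set \<Rightarrow> bool" where
  "transversal L B \<longleftrightarrow> (\<forall>P\<in>L. fst P \<subseteq> B \<and> snd P \<inter> B = {} \<longrightarrow> P = ({}, {}))"

text \<open>Exchange of the two summands on the coordinates in \<open>A\<close>; it realises the twist by \<open>A\<close>.\<close>

definition swap_on :: "'a set \<Rightarrow> 'a set \<times> 'a set \<Rightarrow> 'a set \<times> 'a set" where
  "swap_on A P = ((fst P - A) \<union> (snd P \<inter> A), (snd P - A) \<union> (fst P \<inter> A))"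

lemma swap_on_swap_on [simp]: "swap_on A (swap_on A P) = P"
  by (cases P) (auto simp: swap_on_def)

lemma swap_on_symdiff:
  "swap_on A (X \<triangle> X', Y \<triangle> Y') =
     (fst (swap_on A (X, Y)) \<triangle> fst (swap_on A (X', Y')), snd (swap_on A (X, Y)) \<triangle> snd (swap_on A (X', Y')))"
  by (auto simp: swap_on_def symdiff_def)

lemma card_Int_swap_on:
  assumes "finite X" "finite Y" "finite X'" "finite Y'"
  shows "card (fst (swap_on A (X, Y)) \<inter> snd (swap_on A (X', Y'))) + card (snd (swap_on A (X, Y)) \<inter> fst (swap_on A (X', Y')))
       = card (X \<inter> Y') + card (Y \<inter> X')"
proof -
  let ?S = "fst (swap_on A (X, Y)) \<inter> snd (swap_on A (X', Y'))"
  let ?T = "snd (swap_on A (X, Y)) \<inter> fst (swap_on A (X', Y'))"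
  have "finite ?S" "finite ?T" using assms by (auto simp: swap_on_def)
  moreover have "?S \<inter> A = Y \<inter> X' \<inter> A" "?S - A = X \<inter> Y' - A"
    "?T \<inter> A = X \<inter> Y' \<inter> A" "?T - A = Y \<inter> X' - A" by (auto simp: swap_on_def)
  ultimately show ?thesis
    using card_Int_Diff[of ?S A] card_Int_Diff[of ?T A]
      card_Int_Diff[of "X \<inter> Y'" A] card_Int_Diff[of "Y \<inter> X'" A] assms by simp
qed

lemma lagrangian_matrix_graph:
  assumes "finite E" "sym_matrix_on E C"
  shows "lagrangian E (matrix_graph E C)"
proof -
  have fin: "finite X" if "X \<subseteq> E" for X using assms(1) that finite_subset by blast
  have "card (matrix_graph E C) = 2 ^ card E"
    using assms(1) by (simp add: matrix_graph_def card_image inj_on_def card_Pow)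
  moreover have "matrix_graph E C \<subseteq> Pow E \<times> Pow E"
    using matvec_subset[OF assms(2)] by (auto simp: matrix_graph_def)
  moreover have "(X \<triangle> X', Y \<triangle> Y') \<in> matrix_graph E C \<and> even (card (X \<inter> Y') + card (Y \<inter> X'))"
    if "(X, Y) \<in> matrix_graph E C" "(X', Y') \<in> matrix_graph E C" for X Y X' Y'
  proof -
    have XY: "X \<subseteq> E" "Y = matvec C X" "X' \<subseteq> E" "Y' = matvec C X'"
      using that by (auto simp: matrix_graph_def)
    hence "X \<triangle> X' \<subseteq> E" by (auto simp: symdiff_def)
    thus ?thesis
      using XY matvec_symdiff[OF fin fin] even_card_Int_matvec_add[OF assms(2) fin fin]
      by (auto simp: matrix_graph_def)
  qed
  ultimately show ?thesis unfolding lagrangian_def by blast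
qed

lemma lagrangian_swap_on:
  assumes "finite E" "lagrangian E L"
  shows "lagrangian E (swap_on A ` L)"
proof -
  have "inj_on (swap_on A) L" by (metis inj_on_inverseI swap_on_swap_on)
  hence "card (swap_on A ` L) = 2 ^ card E" using assms(2) by (simp add: card_image lagrangian_def)
  moreover have "swap_on A ` L \<subseteq> Pow E \<times> Pow E"
    using assms(2) by (fastforce simp: lagrangian_def swap_on_def)
  moreover have "(X \<triangle> X', Y \<triangle> Y') \<in> swap_on A ` L \<and> even (card (X \<inter> Y') + card (Y \<inter> X'))"
    if "(X, Y) = swap_on A P" "(X', Y') = swap_on A P'" "P \<in> L" "P' \<in> L" for X Y X' Y' P P'
  proof -
    obtain U V U' V' where P: "P = (U, V)" "P' = (U', V')" by fastforce
    have fin: "finite U" "finite V" "finite U'" "finite V'"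
      using that(3,4) P assms by (auto simp: lagrangian_def intro: finite_subset)
    have "(U \<triangle> U', V \<triangle> V') \<in> L" "even (card (U \<inter> V') + card (V \<inter> U'))"
      using that(3,4) P assms(2) unfolding lagrangian_def by fast+
    thus ?thesis
      using that(1,2) P swap_on_symdiff[of A U U' V V'] card_Int_swap_on[OF fin, of A]
      by (metis fst_conv image_eqI snd_conv)
  qed
  ultimately show ?thesis unfolding lagrangian_def by fast
qed

lemma transversal_swap_on: "transversal (swap_on A ` L) B \<longleftrightarrow> transversal L (A \<triangle> B)"
proof -
  have "(fst (swap_on A P) \<subseteq> B \<and> snd (swap_on A P) \<inter> B = {}) \<longleftrightarrow>
        (fst P \<subseteq> A \<triangle> B \<and> snd P \<inter> (A \<triangle> B) = {})" for P
    unfolding swap_on_def symdiff_def by auto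
  moreover have "swap_on A P = ({}, {}) \<longleftrightarrow> P = ({}, {})" for P
    unfolding swap_on_def prod_eq_iff by auto
  ultimately show ?thesis unfolding transversal_def by (simp only: ball_simps)
qed

lemma transversal_empty_iff: "transversal L {} \<longleftrightarrow> (\<forall>Y. ({}, Y) \<in> L \<longrightarrow> Y = {})"
  unfolding transversal_def by (metis Int_empty_right fst_conv prod.collapse snd_conv subset_empty)

lemma transversal_matrix_graph:
  assumes "B \<subseteq> E"
  shows "transversal (matrix_graph E C) B \<longleftrightarrow> nonsingular_principal C B"
proof -
  have "(X, matvec C X) = ({}, {}) \<longleftrightarrow> X = {}" for X by auto
  hence "transversal (matrix_graph E C) B \<longleftrightarrow>
      (\<forall>X\<in>Pow E. X \<subseteq> B \<and> B \<inter> matvec C X = {} \<longrightarrow> X = {})"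
    unfolding transversal_def matrix_graph_def by (simp only: ball_simps fst_conv snd_conv Int_commute)
  also have "\<dots> \<longleftrightarrow> nonsingular_principal C B"
    unfolding nonsingular_principal_iff_matvec using assms by blast
  finally show ?thesis .
qed

lemma lagrangian_transversal_empty_is_graph:
  assumes "finite E" "lagrangian E L" "transversal L {}"
  obtains g where "L = (\<lambda>X. (X, g X)) ` Pow E"
proof -
  have unique: "Y = Y'" if "(X, Y) \<in> L" "(X, Y') \<in> L" for X Y Y'
  proof -
    have "({}, Y \<triangle> Y') \<in> L"
      using assms(2) that unfolding lagrangian_def by (metis symdiff_def Diff_cancel Un_empty)
    hence "Y \<triangle> Y' = {}" using assms(3) unfolding transversal_empty_iff by blast
    thus ?thesis by (auto simp: symdiff_def)
  qed
  hence "inj_on fst L" unfolding inj_on_def by (metis prod.collapse)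
  hence "card (fst ` L) = card (Pow E)"
    using assms(1,2) by (simp add: card_image card_Pow lagrangian_def)
  moreover have "L \<subseteq> Pow E \<times> Pow E" using assms(2) by (simp add: lagrangian_def)
  hence "fst ` L \<subseteq> Pow E" using image_mono[of L "Pow E \<times> Pow E" fst] by simp
  ultimately have fst_L: "fst ` L = Pow E" using card_subset_eq[of "Pow E" "fst ` L"] assms(1) by simp
  define g where "g X = (THE Y. (X, Y) \<in> L)" for X
  have g: "(X, g X) \<in> L" if "X \<subseteq> E" for X
  proof -
    have "X \<in> fst ` L" using fst_L that by simp
    then obtain P where "P \<in> L" "X = fst P" by (rule imageE)
    hence "\<exists>!Y. (X, Y) \<in> L" using unique by (metis prod.collapse)
    thus ?thesis unfolding g_def by (rule theI')
  qed
  have "L = (\<lambda>X. (X, g X)) ` Pow E"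
  proof
    show "L \<subseteq> (\<lambda>X. (X, g X)) ` Pow E"
    proof
      fix P assume "P \<in> L"
      moreover have "fst P \<subseteq> E" using fst_L \<open>P \<in> L\<close> by blast
      ultimately have "P = (fst P, g (fst P))" using g unique by (metis prod.collapse)
      thus "P \<in> (\<lambda>X. (X, g X)) ` Pow E" using \<open>fst P \<subseteq> E\<close> by blast
    qed
  qed (use g in blast)
  thus thesis by (rule that)
qed
lemma additive_eq_matvec:
  assumes "finite X" "X \<subseteq> E"
    and additive: "\<And>X X'. X \<subseteq> E \<Longrightarrow> X' \<subseteq> E \<Longrightarrow> g (X \<triangle> X') = g X \<triangle> g X'"
    and "g {} = {}" "\<And>x. x \<in> E \<Longrightarrow> g {x} \<subseteq> E"
  shows "g X = matvec (\<lambda>i j. i \<in> E \<and> j \<in> E \<and> i \<in> g {j}) X"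
  using assms(1,2)
proof (induction X rule: finite_induct)
  case (insert x X)
  let ?C = "\<lambda>i j. i \<in> E \<and> j \<in> E \<and> i \<in> g {j}"
  have x_X: "x \<in> E" "X \<subseteq> E" using insert.prems by auto
  have "insert x X = {x} \<triangle> X" using insert.hyps(2) by (auto simp: symdiff_def)
  moreover have "matvec ?C {x} = g {x}"
  proof -
    have "{j\<in>{x}. ?C i j} = (if ?C i x then {x} else {})" for i by auto
    hence "matvec ?C {x} = {i. ?C i x}" unfolding matvec_def by auto
    also have "\<dots> = g {x}" using assms(5) x_X by auto
    finally show ?thesis .
  qed
  ultimately show ?case
    using insert.IH x_X additive[of "{x}" X] matvec_symdiff[of "{x}" X ?C] insert.hyps(1) by simp
qed (simp add: assms(4))

lemma lagrangian_graph_eq_matrix_graph: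
  assumes "finite E" "lagrangian E ((\<lambda>X. (X, g X)) ` Pow E)"
  defines "C \<equiv> \<lambda>i j. i \<in> E \<and> j \<in> E \<and> i \<in> g {j}"
  shows "sym_matrix_on E C" and "(\<lambda>X. (X, g X)) ` Pow E = matrix_graph E C"
proof -
  have graph: "(X, g X) \<in> (\<lambda>X. (X, g X)) ` Pow E" if "X \<subseteq> E" for X
    using that by blast
  have additive: "g (X \<triangle> X') = g X \<triangle> g X'" if "X \<subseteq> E" "X' \<subseteq> E" for X X'
  proof -
    have "(X \<triangle> X', g X \<triangle> g X') \<in> (\<lambda>X. (X, g X)) ` Pow E"
      using assms(2) graph[OF that(1)] graph[OF that(2)] unfolding lagrangian_def by blast
    thus ?thesis by auto
  qed
  have isotropic: "even (card (X \<inter> g X') + card (g X \<inter> X'))" if "X \<subseteq> E" "X' \<subseteq> E" for X X'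
    using assms(2) graph[OF that(1)] graph[OF that(2)] unfolding lagrangian_def by blast
  have "g {} = {}" using additive[of "{}" "{}"] by (simp add: symdiff_def)
  moreover have "g X \<subseteq> E" if "X \<subseteq> E" for X
  proof -
    have "(\<lambda>X. (X, g X)) ` Pow E \<subseteq> Pow E \<times> Pow E" using assms(2) by (simp add: lagrangian_def)
    thus ?thesis using graph[OF that] by blast
  qed
  ultimately have "g X = matvec C X" if "X \<subseteq> E" for X
    unfolding C_def using additive_eq_matvec[OF _ that additive] assms(1) that finite_subset by blast
  thus "(\<lambda>X. (X, g X)) ` Pow E = matrix_graph E C"
    unfolding matrix_graph_def by (intro image_cong) auto
  show "sym_matrix_on E C"
    unfolding sym_matrix_on_def
  proof (intro conjI allI)
    fix i j
    show "C i j = C j i"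
    proof (cases "i \<in> E \<and> j \<in> E")
      case True
      hence "even (card ({i} \<inter> g {j}) + card (g {i} \<inter> {j}))" using isotropic by simp
      thus ?thesis unfolding C_def by (cases "i \<in> g {j}"; cases "j \<in> g {i}") auto
    qed (auto simp: C_def)
  qed (auto simp: C_def)
qed

lemma lagrangian_transversal_empty_eq_matrix_graph:
  assumes "finite E" "lagrangian E L" "transversal L {}"
  shows "\<exists>C. sym_matrix_on E C \<and> L = matrix_graph E C"
proof -
  obtain g where "L = (\<lambda>X. (X, g X)) ` Pow E"
    using lagrangian_transversal_empty_is_graph[OF assms] .
  thus ?thesis using lagrangian_graph_eq_matrix_graph[of E g] assms(1,2) by blast
qed

section \<open>Normal binary delta-matroids\<close>

lemma nonsingular_principal_image:
  assumes "inj_on f E" "B \<subseteq> E"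
  shows "nonsingular_principal C (f ` B) \<longleftrightarrow>
    nonsingular_principal (\<lambda>u w. u \<in> E \<and> w \<in> E \<and> C (f u) (f w)) B"
proof -
  have "card {j\<in>f ` X. C (f i) j} = card {j\<in>X. i \<in> E \<and> j \<in> E \<and> C (f i) (f j)}"
    if "X \<subseteq> B" "i \<in> B" for X i
  proof -
    have "{j\<in>f ` X. C (f i) j} = f ` {j\<in>X. i \<in> E \<and> j \<in> E \<and> C (f i) (f j)}"
      using that assms(2) by auto
    moreover have "inj_on f {j\<in>X. i \<in> E \<and> j \<in> E \<and> C (f i) (f j)}"
      using assms that by (auto intro: inj_on_subset)
    ultimately show ?thesis by (simp add: card_image)
  qed
  moreover have "f ` X = {} \<longleftrightarrow> X = {}" for X by simp
  ultimately show ?thesis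
    unfolding nonsingular_principal_def all_subset_image by (auto simp: ball_simps)
qed

lemma DC_transport:
  assumes "bij_betw f E E'" "sym_matrix_on E' C" "G \<subseteq> Pow E" "(\<lambda>X. f ` X) ` G = DC E' C"
  shows "G = DC E (\<lambda>u w. u \<in> E \<and> w \<in> E \<and> C (f u) (f w))"
proof -
  have inj: "inj_on f E" and image: "f ` E = E'" using assms(1) by (auto simp: bij_betw_def)
  have "B \<in> G \<longleftrightarrow> f ` B \<in> DC E' C" if "B \<subseteq> E" for B
  proof -
    have "inj_on (\<lambda>X. f ` X) (Pow E)" using inj by (auto simp: inj_on_def inj_on_image_eq_iff)
    hence "B \<in> G \<longleftrightarrow> f ` B \<in> (\<lambda>X. f ` X) ` G" using assms(3) that by (auto dest: inj_onD)
    thus ?thesis using assms(4) by simp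
  qed
  moreover have "f ` B \<subseteq> E'" if "B \<subseteq> E" for B using that image by auto
  ultimately show ?thesis
    using assms(3) nonsingular_principal_image[OF inj] by (auto simp: DC_def)
qed

lemma twist_DC_eq_transversal:
  assumes "A \<subseteq> E"
  shows "twist (DC E C) A = {B. B \<subseteq> E \<and> transversal (swap_on A ` matrix_graph E C) B}"
proof -
  have "B \<in> twist (DC E C) A \<longleftrightarrow> A \<triangle> B \<in> DC E C" for B
    unfolding twist_def by (metis image_iff symdiff_symdiff_cancel_left)
  moreover have "B \<subseteq> E \<longleftrightarrow> A \<triangle> B \<subseteq> E" for B using assms by (auto simp: symdiff_def)
  ultimately show ?thesis
    by (auto simp: transversal_swap_on DC_def transversal_matrix_graph)
qed

lemma normal_binary_eq_DC:
  assumes "delta_matroid E F" "normal F" "binary_dm E F"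
  shows "\<exists>C. sym_matrix_on E C \<and> F = DC E C"
proof -
  have fin: "finite E" and F_Pow: "F \<subseteq> Pow E" using assms(1) by (auto simp: delta_matroid_def)
  obtain A E' C and f :: "'a \<Rightarrow> 'a" where A: "A \<subseteq> E" and f: "bij_betw f E E'"
    and C: "sym_matrix_on E' C" and image: "(\<lambda>X. f ` X) ` twist F A = DC E' C"
    using assms(3) unfolding binary_dm_def by (elim exE conjE) (rule that)
  define C0 where "C0 u w \<longleftrightarrow> u \<in> E \<and> w \<in> E \<and> C (f u) (f w)" for u w
  have C0: "sym_matrix_on E C0" using C unfolding sym_matrix_on_def C0_def by auto
  have "twist F A \<subseteq> Pow E" using F_Pow A by (auto simp: twist_def symdiff_def)
  hence "twist F A = DC E C0" unfolding C0_def by (rule DC_transport[OF f C _ image])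
  hence F: "F = {B. B \<subseteq> E \<and> transversal (swap_on A ` matrix_graph E C0) B}"
    using twist_DC_eq_transversal[OF A] twist_twist[of F A] by simp
  hence "transversal (swap_on A ` matrix_graph E C0) {}" using assms(2) by (simp add: normal_def)
  moreover have "lagrangian E (swap_on A ` matrix_graph E C0)"
    using lagrangian_swap_on[OF fin lagrangian_matrix_graph[OF fin C0]] .
  ultimately obtain C' where "sym_matrix_on E C'" "swap_on A ` matrix_graph E C0 = matrix_graph E C'"
    using lagrangian_transversal_empty_eq_matrix_graph[OF fin] by blast
  moreover from this(2) have "F = DC E C'"
    using F by (simp add: DC_def transversal_matrix_graph cong: conj_cong)
  ultimately show ?thesis by blast
qed

lemma DC_inject:
  assumes "sym_matrix_on E C1" "sym_matrix_on E C2" "DC E C1 = DC E C2"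
  shows "C1 = C2"
proof (intro ext)
  fix i j
  have diagonal: "C1 k k = C2 k k" if "k \<in> E" for k
    using assms(3) that nonsingular_principal_singleton
    by (metis (no_types, lifting) DC_def empty_subsetI insert_subset mem_Collect_eq)
  show "C1 i j = C2 i j"
  proof (cases "i \<in> E \<and> j \<in> E \<and> i \<noteq> j")
    case True
    hence "nonsingular_principal C1 {i, j} \<longleftrightarrow> nonsingular_principal C2 {i, j}"
      using assms(3) by (auto simp: DC_def set_eq_iff)
    thus ?thesis
      using True diagonal assms(1,2) nonsingular_principal_doubleton[of i j]
      by (auto simp: sym_matrix_on_def)
  next
    case False
    thus ?thesis using diagonal assms(1,2) by (cases "j \<in> E") (auto simp: sym_matrix_on_def)
  qed
qed

lemma intersection_matrix_eq:
  assumes "sym_matrix_on E C" "F = DC E C"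
  shows "intersection_matrix E F = C"
  unfolding intersection_matrix_def
  using assms DC_inject by (intro the_equality) blast+

section \<open>The complete graph\<close>

definition complete_graph_matrix :: "'a set \<Rightarrow> 'a \<Rightarrow> 'a \<Rightarrow> bool" where
  "complete_graph_matrix E u w \<longleftrightarrow> u \<in> E \<and> w \<in> E \<and> u \<noteq> w"

lemma complete_graph_matrix_kernel:
  assumes "finite B" "B \<subseteq> E" "X \<subseteq> B"
  shows "(\<forall>i\<in>B. even (card {j\<in>X. complete_graph_matrix E i j})) \<longleftrightarrow>
    X = {} \<or> (X = B \<and> odd (card B))"
proof -
  have "finite X" using assms(1,3) finite_subset by blast
  have row: "{j\<in>X. complete_graph_matrix E i j} = X - {i}" if "i \<in> B" for i
    using assms(2,3) that by (auto simp: complete_graph_matrix_def)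
  show ?thesis
  proof
    assume even_rows: "\<forall>i\<in>B. even (card {j\<in>X. complete_graph_matrix E i j})"
    show "X = {} \<or> (X = B \<and> odd (card B))"
    proof (cases "X = {}")
      case False
      then obtain i where "i \<in> X" by blast
      hence "i \<in> B" using assms(3) by blast
      hence "even (card {j\<in>X. complete_graph_matrix E i j})" using even_rows by blast
      hence "even (card (X - {i}))" unfolding row[OF \<open>i \<in> B\<close>] .
      hence odd_X: "odd (card X)"
        using \<open>i \<in> X\<close> \<open>finite X\<close> by (metis card_Suc_Diff1 even_Suc)
      have "X = B"
      proof (rule ccontr)
        assume "X \<noteq> B"
        then obtain k where "k \<in> B" "k \<notin> X" using assms(3) by blast
        hence "even (card {j\<in>X. complete_graph_matrix E k j})" using even_rows by blast
        hence "even (card X)" unfolding row[OF \<open>k \<in> B\<close>] using \<open>k \<notin> X\<close> by simp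
        thus False using odd_X by simp
      qed
      thus ?thesis using odd_X by blast
    qed simp
  next
    assume "X = {} \<or> (X = B \<and> odd (card B))"
    thus "\<forall>i\<in>B. even (card {j\<in>X. complete_graph_matrix E i j})"
      using row assms(1) by (auto simp: card_Diff_singleton)
  qed
qed

lemma DC_complete_graph_matrix:
  assumes "finite E"
  shows "DC E (complete_graph_matrix E) = {B. B \<subseteq> E \<and> even (card B)}"
proof -
  have "nonsingular_principal (complete_graph_matrix E) B \<longleftrightarrow> even (card B)" if "B \<subseteq> E" for B
  proof -
    have "finite B" using assms that finite_subset by blast
    thus ?thesis
      unfolding nonsingular_principal_def
      using complete_graph_matrix_kernel[OF \<open>finite B\<close> that] by fastforce
  qed
  thus ?thesis by (auto simp: DC_def)
qed

lemma twist_even_subsets: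
  assumes "finite E" "A \<subseteq> E"
  shows "twist {B. B \<subseteq> E \<and> even (card B)} A = {X. X \<subseteq> E \<and> (even (card X) \<longleftrightarrow> even (card A))}"
proof (intro set_eqI)
  fix X
  have "X \<in> twist {B. B \<subseteq> E \<and> even (card B)} A \<longleftrightarrow> A \<triangle> X \<subseteq> E \<and> even (card (A \<triangle> X))"
    unfolding twist_def by (metis (no_types, lifting) image_iff mem_Collect_eq symdiff_symdiff_cancel_left)
  moreover have "A \<triangle> X \<subseteq> E \<longleftrightarrow> X \<subseteq> E" using assms(2) by (auto simp: symdiff_def)
  moreover have "even (card (A \<triangle> X)) \<longleftrightarrow> (even (card X) \<longleftrightarrow> even (card A))" if "X \<subseteq> E"
    using even_card_symdiff[of A X] assms that finite_subset by blast
  ultimately show "X \<in> twist {B. B \<subseteq> E \<and> even (card B)} A \<longleftrightarrow>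
      X \<in> {X. X \<subseteq> E \<and> (even (card X) \<longleftrightarrow> even (card A))}"
    by blast
qed

lemma card_image_parity_subsets:
  assumes "finite E"
  shows "card ` {X. X \<subseteq> E \<and> (even (card X) \<longleftrightarrow> b)} = {k. k \<le> card E \<and> (even k \<longleftrightarrow> b)}"
proof
  show "card ` {X. X \<subseteq> E \<and> (even (card X) \<longleftrightarrow> b)} \<subseteq> {k. k \<le> card E \<and> (even k \<longleftrightarrow> b)}"
    using assms by (auto intro: card_mono)
  show "{k. k \<le> card E \<and> (even k \<longleftrightarrow> b)} \<subseteq> card ` {X. X \<subseteq> E \<and> (even (card X) \<longleftrightarrow> b)}"
  proof
    fix k assume k: "k \<in> {k. k \<le> card E \<and> (even k \<longleftrightarrow> b)}"
    then obtain X where "X \<subseteq> E" "card X = k" by (auto elim: obtain_subset_with_card_n)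
    with k have "X \<in> {X. X \<subseteq> E \<and> (even (card X) \<longleftrightarrow> b)}" by simp
    thus "k \<in> card ` {X. X \<subseteq> E \<and> (even (card X) \<longleftrightarrow> b)}"
      by (rule rev_image_eqI) (simp add: \<open>card X = k\<close>)
  qed
qed

lemma width_parity_subsets:
  assumes "finite E" "E \<noteq> {}"
  shows "width {X. X \<subseteq> E \<and> (even (card X) \<longleftrightarrow> b)} =
    (if odd (card E) then card E - 1 else if b then card E else card E - 2)"
proof -
  define n where "n = card E"
  have "n \<ge> 1" using assms by (simp add: n_def Suc_le_eq card_gt_0_iff)
  have finite: "finite {k. k \<le> n \<and> (even k \<longleftrightarrow> b)}" by simp
  have below_n: "k \<le> n - 1" if "k \<le> n" "(even k \<longleftrightarrow> b)" "\<not> (even n \<longleftrightarrow> b)" for k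
    using that by (cases "k = n") auto
  have "Max {k. k \<le> n \<and> (even k \<longleftrightarrow> b)} = (if even n \<longleftrightarrow> b then n else n - 1)"
    using \<open>n \<ge> 1\<close> below_n by (intro Max_eqI[OF finite]) auto
  moreover have "Min {k. k \<le> n \<and> (even k \<longleftrightarrow> b)} = (if b then 0 else 1)"
    using \<open>n \<ge> 1\<close> by (intro Min_eqI[OF finite]) (auto simp: Suc_le_eq intro: Nat.gr0I)
  ultimately show ?thesis
    unfolding width_def card_image_parity_subsets[OF assms(1)] n_def[symmetric]
    using \<open>n \<ge> 1\<close> by auto
qed

lemma card_even_subsets:
  assumes "finite E" "E \<noteq> {}"
  shows "card {A. A \<subseteq> E \<and> even (card A)} = 2 ^ (card E - 1)"
    and "card {A. A \<subseteq> E \<and> odd (card A)} = 2 ^ (card E - 1)"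
proof -
  have "card {A. A \<subseteq> E \<and> even (card A)} = card {A. A \<subseteq> E \<and> odd (card A)}"
    using card_subsupersets_even_odd[of E "{}"] assms by auto
  moreover have "{A. A \<subseteq> E \<and> even (card A)} \<union> {A. A \<subseteq> E \<and> odd (card A)} = Pow E" by auto
  hence "card {A. A \<subseteq> E \<and> even (card A)} + card {A. A \<subseteq> E \<and> odd (card A)} = 2 ^ card E"
    using assms(1) card_Un_disjoint[of "{A. A \<subseteq> E \<and> even (card A)}" "{A. A \<subseteq> E \<and> odd (card A)}"]
    by (simp add: card_Pow disjoint_iff)
  moreover have "(2::nat) ^ card E = 2 * 2 ^ (card E - 1)"
    using assms by (metis card_gt_0_iff power_eq_if not_gr0)
  ultimately show "card {A. A \<subseteq> E \<and> even (card A)} = 2 ^ (card E - 1)"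
    and "card {A. A \<subseteq> E \<and> odd (card A)} = 2 ^ (card E - 1)" by simp_all
qed

lemma sum_monom_constant: "(\<Sum>x\<in>S. monom (1::int) k) = monom (of_nat (card S)) k"
  by (simp add: of_nat_monom mult_monom)

lemma twist_poly_even_subsets:
  assumes "finite E" "E \<noteq> {}"
  defines "n \<equiv> card E"
  shows "twist_poly E {B. B \<subseteq> E \<and> even (card B)} =
    (if odd n then monom (2 ^ n) (n - 1) else monom (2 ^ (n - 1)) n + monom (2 ^ (n - 1)) (n - 2))"
proof -
  have "width (twist {B. B \<subseteq> E \<and> even (card B)} A) =
      (if odd n then n - 1 else if even (card A) then n else n - 2)" if "A \<subseteq> E" for A
    unfolding twist_even_subsets[OF assms(1) that] width_parity_subsets[OF assms(1,2)] n_def ..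
  hence "twist_poly E {B. B \<subseteq> E \<and> even (card B)} =
      (\<Sum>A\<in>Pow E. monom 1 (if odd n then n - 1 else if even (card A) then n else n - 2))"
    unfolding twist_poly_def by (intro sum.cong) auto
  also have "\<dots> = (if odd n then monom (2 ^ n) (n - 1) else monom (2 ^ (n - 1)) n + monom (2 ^ (n - 1)) (n - 2))"
  proof (cases "odd n")
    case True
    hence "(\<Sum>A\<in>Pow E. monom 1 (if odd n then n - 1 else if even (card A) then n else n - 2)) =
        (\<Sum>A\<in>Pow E. monom (1::int) (n - 1))" by simp
    also have "\<dots> = monom (2 ^ n) (n - 1)"
      unfolding sum_monom_constant using assms(1) by (simp add: card_Pow n_def)
    finally show ?thesis using True by simp
  next
    case False
    have "Pow E = {A. A \<subseteq> E \<and> even (card A)} \<union> {A. A \<subseteq> E \<and> odd (card A)}" by auto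
    hence "(\<Sum>A\<in>Pow E. monom 1 (if odd n then n - 1 else if even (card A) then n else n - 2)) =
        (\<Sum>A\<in>{A. A \<subseteq> E \<and> even (card A)}. monom (1::int) n) +
        (\<Sum>A\<in>{A. A \<subseteq> E \<and> odd (card A)}. monom 1 (n - 2))"
      using assms(1) False by (simp add: sum.union_disjoint disjoint_iff)
    also have "\<dots> = monom (2 ^ (n - 1)) n + monom (2 ^ (n - 1)) (n - 2)"
      unfolding sum_monom_constant card_even_subsets[OF assms(1,2)] n_def by simp
    finally show ?thesis using False by simp
  qed
  finally show ?thesis .
qed

theorem mainTheorem5:
  fixes E :: "'a set" and F :: "'a set set" and v :: nat
  assumes "delta_matroid E F" and "normal F" and "binary_dm E F"
    and "card E = v" and "v \<ge> 1"
    and "\<forall>u\<in>E. \<forall>w\<in>E. intersection_matrix E F u w = (u \<noteq> w)"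
  shows "twist_poly E F =
    (if odd v then monom (2 ^ v) (v - 1)
     else monom (2 ^ (v - 1)) v + monom (2 ^ (v - 1)) (v - 2))"
proof -
  have "finite E" using assms(1) by (simp add: delta_matroid_def)
  have "E \<noteq> {}" using assms(4,5) by auto
  obtain C where C: "sym_matrix_on E C" "F = DC E C"
    using normal_binary_eq_DC[OF assms(1-3)] by blast
  have "C u w = complete_graph_matrix E u w" for u w
  proof (cases "u \<in> E \<and> w \<in> E")
    case True
    thus ?thesis using assms(6) intersection_matrix_eq[OF C] by (simp add: complete_graph_matrix_def)
  qed (use C(1) in \<open>auto simp: sym_matrix_on_def complete_graph_matrix_def\<close>)
  hence "C = complete_graph_matrix E" by blast
  hence "F = {B. B \<subseteq> E \<and> even (card B)}"
    using C(2) DC_complete_graph_matrix[OF \<open>finite E\<close>] by simp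
  thus ?thesis
    using twist_poly_even_subsets[OF \<open>finite E\<close> \<open>E \<noteq> {}\<close>] assms(4) by simp
qed

end
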